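(* Let $E,F$ be vector lattices with $F$ Dedekind complete, and let $S,T\in\mathcal{U}_+(E,F)$. Then $S\wedge T=0$ in $\mathcal{U}(E,F)$ if and only if for every $x\in E$ and every $\varepsilon>0$ there exist a partition of unity $(\rho_\alpha)_{\alpha\in\Delta}$ in $\mathfrak{P}(F)$ and a family $(x_\alpha)_{\alpha\in\Delta}\subset\mathcal{F}_x$ such that \[ \rho_\alpha Tx_\alpha\le\varepsilon\,Tx\quad\text{and}\quad\rho_\alpha S(x-x_\alpha)\le\varepsilon\,Sx\quad\text{for all }\alpha\in\Delta. \]
   Context: For a vector lattice $E$, an element $z$ is a fragment of $x\in E$ if $|z|\wedge|x-z|=0$; $\mathcal{F}_x$ denotes the set of fragments of $x$. An operator $T\colon E\to F$ between vector lattices is orthogonally additive if $T(x+y)=Tx+Ty$ whenever $|x|\wedge|y|=0$. $\mathcal{U}(E,F)$ is the set of orthogonally additive, order bounded (in general nonlinear) operators $E\to F$, ordered by $S\le T$ iff $Tx-Sx\ge0$ for all $x\in E$; $\mathcal{U}_+(E,F)$ is its positive cone. For Dedekind complete $F$, $\mathcal{U}(E,F)$ is a Dedekind complete vector lattice. $\mathfrak{P}(F)$ is the Boolean algebra of band projections of $F$ ($\rho'\wedge\rho''=\rho'\rho''$, $\rho^\perp=I_F-\rho$). A partition of unity in $\mathfrak{P}(F)$ is a family $(\rho_\alpha)$ of band projections with $\rho_\alpha\wedge\rho_\beta=0$ for $\alpha\ne\beta$ and $\sup_\alpha\rho_\alpha=I_F$. *)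

theory Defs
  imports Main "HOL.Real_Vector_Spaces"
begin

class vector_lattice = ordered_real_vector + lattice

definition vabs :: "'a::vector_lattice \<Rightarrow> 'a" where
  "vabs x = sup x (- x)"

definition disjoint_el :: "'a::vector_lattice \<Rightarrow> 'a \<Rightarrow> bool" where
  "disjoint_el x y \<longleftrightarrow> inf (vabs x) (vabs y) = 0"

definition dedekind_complete :: "'a::vector_lattice itself \<Rightarrow> bool" where
  "dedekind_complete _ \<longleftrightarrow>
     (\<forall>A :: 'a set. A \<noteq> {} \<and> (\<exists>u. \<forall>a\<in>A. a \<le> u) \<longrightarrow>
        (\<exists>s. (\<forall>a\<in>A. a \<le> s) \<and> (\<forall>u. (\<forall>a\<in>A. a \<le> u) \<longrightarrow> s \<le> u)))"

definition fragments :: "'a::vector_lattice \<Rightarrow> 'a set" where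
  "fragments x = {z. disjoint_el z (x - z)}"

definition order_bounded_set :: "'a::vector_lattice set \<Rightarrow> bool" where
  "order_bounded_set A \<longleftrightarrow> (\<exists>a b. \<forall>x\<in>A. a \<le> x \<and> x \<le> b)"

definition orth_additive :: "('e::vector_lattice \<Rightarrow> 'f::vector_lattice) \<Rightarrow> bool" where
  "orth_additive T \<longleftrightarrow> (\<forall>x y. disjoint_el x y \<longrightarrow> T (x + y) = T x + T y)"

definition order_bounded_op :: "('e::vector_lattice \<Rightarrow> 'f::vector_lattice) \<Rightarrow> bool" where
  "order_bounded_op T \<longleftrightarrow> (\<forall>A. order_bounded_set A \<longrightarrow> order_bounded_set (T ` A))"

definition U_ops :: "('e::vector_lattice \<Rightarrow> 'f::vector_lattice) set" where
  "U_ops = {T. orth_additive T \<and> order_bounded_op T}"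

definition U_le :: "('e::vector_lattice \<Rightarrow> 'f::vector_lattice) \<Rightarrow> ('e \<Rightarrow> 'f) \<Rightarrow> bool" where
  "U_le S T \<longleftrightarrow> (\<forall>x. 0 \<le> T x - S x)"

definition U_pos :: "('e::vector_lattice \<Rightarrow> 'f::vector_lattice) set" where
  "U_pos = {T \<in> U_ops. U_le (\<lambda>_. 0) T}"

definition U_inf_is :: "('e::vector_lattice \<Rightarrow> 'f::vector_lattice) \<Rightarrow> ('e \<Rightarrow> 'f) \<Rightarrow> ('e \<Rightarrow> 'f) \<Rightarrow> bool" where
  "U_inf_is S T R \<longleftrightarrow> R \<in> U_ops \<and> U_le R S \<and> U_le R T \<and>
     (\<forall>Q\<in>U_ops. U_le Q S \<and> U_le Q T \<longrightarrow> U_le Q R)"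

definition disj_compl :: "'a::vector_lattice set \<Rightarrow> 'a set" where
  "disj_compl B = {y. \<forall>x\<in>B. disjoint_el x y}"

definition ideal_vl :: "'a::vector_lattice set \<Rightarrow> bool" where
  "ideal_vl B \<longleftrightarrow> 0 \<in> B \<and> (\<forall>x\<in>B. \<forall>y\<in>B. x + y \<in> B) \<and> (\<forall>x\<in>B. \<forall>c. c *\<^sub>R x \<in> B)
     \<and> (\<forall>x y. y \<in> B \<and> vabs x \<le> vabs y \<longrightarrow> x \<in> B)"

definition band :: "'a::vector_lattice set \<Rightarrow> bool" where
  "band B \<longleftrightarrow> ideal_vl B \<and>
     (\<forall>A s. A \<subseteq> B \<and> (\<forall>a\<in>A. a \<le> s) \<and> (\<forall>u. (\<forall>a\<in>A. a \<le> u) \<longrightarrow> s \<le> u) \<longrightarrow> s \<in> B)"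

definition projection_band :: "'a::vector_lattice set \<Rightarrow> bool" where
  "projection_band B \<longleftrightarrow> band B \<and> (\<forall>x. \<exists>b\<in>B. x - b \<in> disj_compl B)"

definition band_projection :: "('a::vector_lattice \<Rightarrow> 'a) \<Rightarrow> bool" where
  "band_projection P \<longleftrightarrow> (\<exists>B. projection_band B \<and> (\<forall>x. P x \<in> B \<and> x - P x \<in> disj_compl B))"

text \<open>Order of the Boolean algebra of band projections: \<rho> \<le> \<pi> iff \<rho> \<pi> = \<rho>;
  meet is composition.\<close>
definition bp_le :: "('a::vector_lattice \<Rightarrow> 'a) \<Rightarrow> ('a \<Rightarrow> 'a) \<Rightarrow> bool" where
  "bp_le \<rho> \<pi> \<longleftrightarrow> \<rho> \<circ> \<pi> = \<rho>"

definition partition_of_unity :: "'i set \<Rightarrow> ('i \<Rightarrow> 'a::vector_lattice \<Rightarrow> 'a) \<Rightarrow> bool" where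
  "partition_of_unity \<Delta> \<rho> \<longleftrightarrow>
     (\<forall>\<alpha>\<in>\<Delta>. band_projection (\<rho> \<alpha>)) \<and>
     (\<forall>\<alpha>\<in>\<Delta>. \<forall>\<beta>\<in>\<Delta>. \<alpha> \<noteq> \<beta> \<longrightarrow> \<rho> \<alpha> \<circ> \<rho> \<beta> = (\<lambda>_. 0)) \<and>
     (\<forall>\<pi>. band_projection \<pi> \<and> (\<forall>\<alpha>\<in>\<Delta>. bp_le (\<rho> \<alpha>) \<pi>) \<longrightarrow> \<pi> = id)"

end

theory Submission
  imports Defs "HOL-Library.Lattice_Algebras"
begin

text \<open>If \<open>S \<and> T = 0\<close>, then the infimum formula \<open>inf {T y + S (x - y) | y fragment of x}\<close> vanishes.
  Hence below every nonzero element of \<open>F\<close> there is a nonzero principal band and a fragment \<open>y\<close>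
  with \<open>T y\<close> and \<open>S (x - y)\<close> \<open>\<epsilon>\<close>-small on that band, and a Zorn exhaustion by pairwise disjoint
  principal projections of this kind is a partition of unity. Conversely, if \<open>R \<le> S, T\<close> in
  \<open>U(E,F)\<close>, then \<open>\<rho>\<^sub>\<alpha> R x \<le> \<rho>\<^sub>\<alpha> (T x\<^sub>\<alpha> + S (x - x\<^sub>\<alpha>)) \<le> \<epsilon> (T x + S x)\<close> for every \<open>\<alpha>\<close>; as the
  \<open>\<rho>\<^sub>\<alpha>\<close> form a partition of unity, \<open>R x \<le> \<epsilon> (T x + S x)\<close> for all \<open>\<epsilon> > 0\<close>, so \<open>R x \<le> 0\<close>
  by the Archimedean property of the Dedekind complete space \<open>F\<close>.\<close>

subclass (in vector_lattice) lattice_ab_group_add ..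

text \<open>Pushing negations through \<open>inf\<close>/\<open>sup\<close> destroys the negative part \<open>pprt (- x)\<close> used below
  and makes the simplifier loop.\<close>

declare neg_inf_eq_sup[simp del] neg_sup_eq_inf[simp del] diff_inf_eq_sup[simp del] diff_sup_eq_inf[simp del]


section \<open>Arithmetic in vector lattices\<close>

lemma vabs_ge: "x \<le> vabs x" "- x \<le> vabs x"
  by (simp_all add: vabs_def)

lemma vabs_nonneg: "0 \<le> vabs (x::'a::vector_lattice)"
proof -
  have "x + - x \<le> vabs x + vabs x"
    by (rule add_mono) (simp_all add: vabs_ge)
  thus ?thesis by simp
qed

lemma vabs_uminus [simp]: "vabs (- x) = vabs (x::'a::vector_lattice)"
  by (simp add: vabs_def sup_commute)

lemma vabs_zero [simp]: "vabs (0::'a::vector_lattice) = 0"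
  by (simp add: vabs_def)

lemma vabs_le_0_imp_0: "vabs (x::'a::vector_lattice) \<le> 0 \<Longrightarrow> x = 0"
  using order.antisym[OF _ vabs_nonneg] sup_0_imp_0 unfolding vabs_def by blast

lemma vabs_of_nonneg: "0 \<le> (x::'a::vector_lattice) \<Longrightarrow> vabs x = x"
  by (simp add: vabs_def sup_absorb1 order_trans[of "- x" 0 x])

lemma vabs_triangle: "vabs (x + y) \<le> vabs x + vabs (y::'a::vector_lattice)"
  unfolding vabs_def
proof (rule sup_least)
  show "x + y \<le> sup x (- x) + sup y (- y)" by (rule add_mono) simp_all
  have "- x + - y \<le> sup x (- x) + sup y (- y)" by (rule add_mono) simp_all
  thus "- (x + y) \<le> sup x (- x) + sup y (- y)" by simp
qed

lemma vabs_diff_le: "vabs (x - y) \<le> vabs x + vabs (y::'a::vector_lattice)"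
  using vabs_triangle[of x "- y"] by simp

lemma scaleR_sup_nonneg:
  assumes "0 \<le> c"
  shows "c *\<^sub>R sup a b = sup (c *\<^sub>R a) (c *\<^sub>R (b::'a::vector_lattice))"
proof (cases "c = 0")
  case False
  with assms have c: "0 < c" by simp
  have "inverse c *\<^sub>R (c *\<^sub>R a) \<le> inverse c *\<^sub>R sup (c *\<^sub>R a) (c *\<^sub>R b)"
    "inverse c *\<^sub>R (c *\<^sub>R b) \<le> inverse c *\<^sub>R sup (c *\<^sub>R a) (c *\<^sub>R b)"
    by (rule scaleR_left_mono; use c in simp)+
  with False have "sup a b \<le> inverse c *\<^sub>R sup (c *\<^sub>R a) (c *\<^sub>R b)" by simp
  hence "c *\<^sub>R sup a b \<le> c *\<^sub>R (inverse c *\<^sub>R sup (c *\<^sub>R a) (c *\<^sub>R b))"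
    by (rule scaleR_left_mono) (use c in simp)
  with False have "c *\<^sub>R sup a b \<le> sup (c *\<^sub>R a) (c *\<^sub>R b)" by simp
  thus ?thesis using assms by (simp add: order.antisym scaleR_left_mono)
qed simp

lemma scaleR_inf_nonneg:
  assumes "0 \<le> c"
  shows "c *\<^sub>R inf a b = inf (c *\<^sub>R a) (c *\<^sub>R (b::'a::vector_lattice))"
  using scaleR_sup_nonneg[OF assms, of "- a" "- b"]
  by (simp add: inf_eq_neg_sup[of a b] inf_eq_neg_sup[of "c *\<^sub>R a"] scaleR_minus_right)

lemma vabs_scaleR: "vabs (c *\<^sub>R x) = \<bar>c\<bar> *\<^sub>R vabs (x::'a::vector_lattice)"
proof (cases "0 \<le> c")
  case True thus ?thesis by (simp add: vabs_def scaleR_sup_nonneg)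
next
  case False
  hence "vabs (c *\<^sub>R x) = (- c) *\<^sub>R vabs x"
    using scaleR_sup_nonneg[of "- c" x "- x"] by (simp add: vabs_def sup_commute)
  thus ?thesis using False by simp
qed

lemma pprt_diff_pprt_uminus: "pprt x - pprt (- x) = (x::'a::vector_lattice)"
  by (metis pprt_neg prts diff_minus_eq_add)

lemma inf_pprt_pprt_uminus: "inf (pprt x) (pprt (- x)) = (0::'a::vector_lattice)"
proof -
  have "inf (pprt x) (pprt (- x)) - pprt (- x) = inf x 0"
    using add_inf_distrib_right[of "pprt x" "pprt (- x)" "- pprt (- x)"]
    by (simp add: pprt_diff_pprt_uminus)
  also have "\<dots> = - pprt (- x)" by (simp add: pprt_neg nprt_def)
  finally show ?thesis by simp
qed

lemma vabs_diff_of_disjoint_nonneg: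
  assumes "0 \<le> p" "0 \<le> q" "inf p q = (0::'a::vector_lattice)"
  shows "vabs (p - q) = p + q"
proof -
  have "vabs (p - q) + (p + q) = sup (p + p) (q + q)"
    unfolding vabs_def add_sup_distrib_right by (simp add: algebra_simps)
  also have "\<dots> = 2 *\<^sub>R sup p q" using scaleR_sup_nonneg[of 2 p q] by (simp add: scaleR_2)
  also have "\<dots> = (p + q) + (p + q)" using add_eq_inf_sup[of p q] assms by (simp add: scaleR_2)
  finally show ?thesis by simp
qed

lemma vabs_eq_pprt_add: "vabs x = pprt x + pprt (- (x::'a::vector_lattice))"
  using vabs_diff_of_disjoint_nonneg[OF zero_le_pprt zero_le_pprt inf_pprt_pprt_uminus, of x]
  by (simp add: pprt_diff_pprt_uminus)

lemma pprt_le_vabs: "pprt x \<le> vabs (x::'a::vector_lattice)"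
  and pprt_uminus_le_vabs: "pprt (- x) \<le> vabs x"
  using vabs_eq_pprt_add[of x] by (simp_all add: add_increasing add_increasing2)

lemma vabs_pprt: "vabs (pprt x) = pprt (x::'a::vector_lattice)"
  by (simp add: vabs_of_nonneg)

lemma inf_add_le:
  assumes "0 \<le> u" "0 \<le> v" "0 \<le> (w::'a::vector_lattice)"
  shows "inf (u + v) w \<le> inf u w + inf v w"
proof -
  let ?t = "inf (u + v) w"
  have "?t \<le> v + u" by (simp add: add.commute le_infI1)
  moreover have "?t \<le> w + u" using assms(1) by (simp add: le_infI2 add_increasing2)
  ultimately have "?t - u \<le> inf v w" by (simp only: diff_le_eq[symmetric] le_inf_iff)
  hence "?t - inf v w \<le> u" by (simp only: diff_le_eq add.commute)
  moreover have "?t - inf v w \<le> w"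
    using assms(2,3) by (simp add: diff_le_eq add_increasing2)
  ultimately have "?t - inf v w \<le> inf u w" by simp
  thus ?thesis by (simp only: diff_le_eq)
qed

lemma inf_add_eq_0:
  assumes "0 \<le> u" "0 \<le> v" "0 \<le> (w::'a::vector_lattice)" "inf u w = 0" "inf v w = 0"
  shows "inf (u + v) w = 0"
  using inf_add_le[OF assms(1-3)] assms by (simp add: order.antisym)

lemma inf_eq_0_mono:
  assumes "0 \<le> u" "0 \<le> v" "u \<le> u'" "v \<le> v'" "inf u' v' = (0::'a::vector_lattice)"
  shows "inf u v = 0"
  using inf_mono[OF assms(3,4)] assms by (simp add: order.antisym)

lemma riesz_decomposition_disjoint:
  assumes "0 \<le> p" "0 \<le> u1" "0 \<le> u2" "inf u1 u2 = 0" "p \<le> u1 + (u2::'a::vector_lattice)"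
  shows "p = inf p u1 + inf p u2"
proof (rule order.antisym)
  have "p = inf (u1 + u2) p" using assms(5) by (simp add: inf_absorb2)
  also have "\<dots> \<le> inf u1 p + inf u2 p" by (rule inf_add_le[OF assms(2,3,1)])
  finally show "p \<le> inf p u1 + inf p u2" by (simp add: inf_commute)
  have "inf (inf p u1) (inf p u2) = 0"
    by (rule inf_eq_0_mono[of _ _ u1 u2]) (use assms in simp_all)
  hence "inf p u1 + inf p u2 = sup (inf p u1) (inf p u2)"
    using add_eq_inf_sup[of "inf p u1" "inf p u2"] by simp
  also have "\<dots> \<le> p" by simp
  finally show "inf p u1 + inf p u2 \<le> p" .
qed

section \<open>Disjointness and fragments\<close>

lemma disjoint_el_sym: "disjoint_el x y \<longleftrightarrow> disjoint_el y x"
  by (simp add: disjoint_el_def inf_commute)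

lemma disjoint_el_zero [simp]: "disjoint_el (x::'a::vector_lattice) 0" "disjoint_el 0 x"
  by (simp_all add: disjoint_el_def vabs_nonneg inf_absorb2 inf_absorb1)

lemma disjoint_el_self: "disjoint_el x (x::'a::vector_lattice) \<Longrightarrow> x = 0"
  by (simp add: disjoint_el_def vabs_le_0_imp_0)

lemma disjoint_el_mono:
  "disjoint_el x z \<Longrightarrow> vabs y \<le> vabs x \<Longrightarrow> vabs y' \<le> vabs z \<Longrightarrow> disjoint_el y (y'::'a::vector_lattice)"
  unfolding disjoint_el_def by (rule inf_eq_0_mono[OF vabs_nonneg vabs_nonneg])

lemma disjoint_el_add_left:
  "disjoint_el x z \<Longrightarrow> disjoint_el y z \<Longrightarrow> disjoint_el (x + y) (z::'a::vector_lattice)"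
  unfolding disjoint_el_def
  by (rule inf_eq_0_mono[OF vabs_nonneg vabs_nonneg vabs_triangle order_refl
        inf_add_eq_0[OF vabs_nonneg vabs_nonneg vabs_nonneg]])

lemma disjoint_el_scaleR_left:
  assumes "disjoint_el x (z::'a::vector_lattice)"
  shows "disjoint_el (c *\<^sub>R x) z"
proof -
  define k where "k = max 1 \<bar>c\<bar>"
  have k: "1 \<le> k" "\<bar>c\<bar> \<le> k" by (simp_all add: k_def)
  have "vabs (c *\<^sub>R x) \<le> k *\<^sub>R vabs x"
    unfolding vabs_scaleR by (rule scaleR_right_mono[OF k(2) vabs_nonneg])
  moreover have "vabs z \<le> k *\<^sub>R vabs z"
    using scaleR_right_mono[OF k(1) vabs_nonneg[of z]] by simp
  moreover have "inf (k *\<^sub>R vabs x) (k *\<^sub>R vabs z) = 0"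
    using k assms by (simp add: disjoint_el_def flip: scaleR_inf_nonneg)
  ultimately show ?thesis
    unfolding disjoint_el_def by (rule inf_eq_0_mono[OF vabs_nonneg vabs_nonneg])
qed

lemma disjoint_el_bounded:
  assumes "disjoint_el z1 (z2::'a::vector_lattice)" "0 \<le> c"
    and "vabs a \<le> c *\<^sub>R vabs z1" "vabs b \<le> c *\<^sub>R vabs z2"
  shows "disjoint_el a b"
proof -
  have "disjoint_el (c *\<^sub>R z1) (c *\<^sub>R z2)"
    using disjoint_el_scaleR_left assms(1) disjoint_el_sym by blast
  thus ?thesis by (rule disjoint_el_mono) (use assms(2-4) in \<open>simp_all add: vabs_scaleR\<close>)
qed

lemma vabs_add_of_disjoint:
  assumes "disjoint_el a (b::'a::vector_lattice)"
  shows "vabs (a + b) = vabs a + vabs b"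
proof -
  let ?p = "pprt a + pprt b" and ?n = "pprt (- a) + pprt (- b)"
  have "inf (vabs b) (vabs a) = 0" using assms by (simp add: disjoint_el_def inf_commute)
  hence "inf (pprt (- b)) (pprt a) = 0" "inf (pprt (- a)) (pprt b) = 0"
    using assms unfolding disjoint_el_def
    by (auto intro: inf_eq_0_mono pprt_le_vabs pprt_uminus_le_vabs)
  moreover have "inf (pprt (- a)) (pprt a) = 0" "inf (pprt (- b)) (pprt b) = 0"
    using inf_pprt_pprt_uminus by (simp_all add: inf_commute)
  ultimately have "inf ?n (pprt a) = 0" "inf ?n (pprt b) = 0"
    by (simp_all add: inf_add_eq_0)
  hence "inf ?p ?n = 0"
    by (intro inf_add_eq_0) (simp_all add: add_nonneg_nonneg inf_commute)
  hence "vabs (?p - ?n) = ?p + ?n"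
    by (intro vabs_diff_of_disjoint_nonneg) (simp_all add: add_nonneg_nonneg)
  moreover have "a + b = ?p - ?n"
    using pprt_diff_pprt_uminus[of a] pprt_diff_pprt_uminus[of b] by (simp add: algebra_simps)
  ultimately have "vabs (a + b) = ?p + ?n" by (simp only:)
  thus ?thesis unfolding vabs_eq_pprt_add[of a] vabs_eq_pprt_add[of b] by (simp add: algebra_simps)
qed

lemma fragments_zero: "0 \<in> fragments x" and fragments_self: "x \<in> fragments x"
  by (simp_all add: fragments_def)

lemma vabs_fragment: "y \<in> fragments x \<Longrightarrow> vabs x = vabs y + vabs (x - (y::'a::vector_lattice))"
  unfolding fragments_def using vabs_add_of_disjoint[of y "x - y"] by simp

lemma vabs_fragment_le: "y \<in> fragments x \<Longrightarrow> vabs y \<le> vabs (x::'a::vector_lattice)"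
  and vabs_fragment_diff_le: "y \<in> fragments x \<Longrightarrow> vabs (x - y) \<le> vabs (x::'a::vector_lattice)"
  using vabs_fragment[of y x] vabs_nonneg[of y] vabs_nonneg[of "x - y"] by simp_all

definition component :: "'a::vector_lattice \<Rightarrow> 'a \<Rightarrow> 'a" where
  "component a u = inf (pprt a) u - inf (pprt (- a)) u"

lemma vabs_component_le:
  assumes "0 \<le> u"
  shows "vabs (component a u) \<le> vabs (a::'a::vector_lattice)"
    and "vabs (component a u) \<le> 2 *\<^sub>R u"
proof -
  have "vabs (component a u) \<le> inf (pprt a) u + inf (pprt (- a)) u"
    using vabs_diff_le[of "inf (pprt a) u" "inf (pprt (- a)) u"] assms
    by (simp add: component_def vabs_of_nonneg)
  moreover have "inf (pprt a) u + inf (pprt (- a)) u \<le> vabs a"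
    by (simp add: vabs_eq_pprt_add add_mono le_infI1)
  moreover have "inf (pprt a) u + inf (pprt (- a)) u \<le> 2 *\<^sub>R u"
    by (simp add: scaleR_2 add_mono)
  ultimately show "vabs (component a u) \<le> vabs a" "vabs (component a u) \<le> 2 *\<^sub>R u"
    by (blast intro: order_trans)+
qed

lemma component_split:
  assumes d: "disjoint_el z1 (z2::'a::vector_lattice)" and a: "vabs a \<le> vabs (z1 + z2)"
  shows "a = component a (vabs z1) + component a (vabs z2)"
proof -
  have i: "inf (vabs z1) (vabs z2) = 0" using d by (simp add: disjoint_el_def)
  have s: "vabs (z1 + z2) = vabs z1 + vabs z2" by (rule vabs_add_of_disjoint[OF d])
  have "pprt a = inf (pprt a) (vabs z1) + inf (pprt a) (vabs z2)"
    by (rule riesz_decomposition_disjoint[OF zero_le_pprt vabs_nonneg vabs_nonneg i])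
       (use pprt_le_vabs[of a] a s in simp)
  moreover have "pprt (- a) = inf (pprt (- a)) (vabs z1) + inf (pprt (- a)) (vabs z2)"
    by (rule riesz_decomposition_disjoint[OF zero_le_pprt vabs_nonneg vabs_nonneg i])
       (use pprt_uminus_le_vabs[of a] a s in simp)
  ultimately have "pprt a - pprt (- a) = component a (vabs z1) + component a (vabs z2)"
    unfolding component_def by (simp add: algebra_simps)
  thus ?thesis by (simp add: pprt_diff_pprt_uminus)
qed

lemma fragment_of_disjoint_sum:
  assumes d: "disjoint_el z1 (z2::'a::vector_lattice)" and y: "y \<in> fragments (z1 + z2)"
  shows "\<exists>y1\<in>fragments z1. \<exists>y2\<in>fragments z2. y = y1 + y2"
proof -
  let ?c = "z1 + z2 - y"
  define y1 where "y1 = component y (vabs z1)"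
  define y2 where "y2 = component y (vabs z2)"
  define c1 where "c1 = component ?c (vabs z1)"
  define c2 where "c2 = component ?c (vabs z2)"
  note bounds = vabs_component_le[OF vabs_nonneg]
  have yc: "disjoint_el y ?c" using y by (simp add: fragments_def)
  have ysplit: "y = y1 + y2"
    unfolding y1_def y2_def by (rule component_split[OF d vabs_fragment_le[OF y]])
  have csplit: "?c = c1 + c2"
    unfolding c1_def c2_def by (rule component_split[OF d vabs_fragment_diff_le[OF y]])
  \<comment> \<open>\<open>z1 - y1 - c1 = y2 + c2 - z2\<close> lies under both \<open>5 vabs z1\<close> and \<open>5 vabs z2\<close>, so it vanishes.\<close>
  have "vabs (z1 - y1 - c1) \<le> vabs z1 + vabs y1 + vabs c1"
    using vabs_diff_le[of "z1 - y1" c1] add_right_mono[OF vabs_diff_le[of z1 y1]]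
    by (rule order_trans)
  also have "\<dots> \<le> vabs z1 + 2 *\<^sub>R vabs z1 + 2 *\<^sub>R vabs z1"
    unfolding y1_def c1_def by (intro add_mono bounds order_refl)
  also have "\<dots> = (1 + 2 + 2) *\<^sub>R vabs z1" by (simp only: scaleR_left_distrib scaleR_one)
  finally have b1: "vabs (z1 - y1 - c1) \<le> 5 *\<^sub>R vabs z1" by simp
  have "vabs (y2 + c2 - z2) \<le> vabs y2 + vabs c2 + vabs z2"
    using vabs_diff_le[of "y2 + c2" z2] add_right_mono[OF vabs_triangle[of y2 c2]]
    by (rule order_trans)
  also have "\<dots> \<le> 2 *\<^sub>R vabs z2 + 2 *\<^sub>R vabs z2 + vabs z2"
    unfolding y2_def c2_def by (intro add_mono bounds order_refl)
  also have "\<dots> = (2 + 2 + 1) *\<^sub>R vabs z2" by (simp only: scaleR_left_distrib scaleR_one)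
  finally have b2: "vabs (y2 + c2 - z2) \<le> 5 *\<^sub>R vabs z2" by simp
  have "z1 - y1 - c1 = y2 + c2 - z2" using ysplit csplit by (simp add: algebra_simps)
  with disjoint_el_bounded[OF d _ b1 b2] have "z1 - y1 = c1"
    using disjoint_el_self by fastforce
  moreover have "disjoint_el y1 c1"
    by (rule disjoint_el_mono[OF yc]) (simp_all add: y1_def c1_def bounds)
  ultimately have "y1 \<in> fragments z1" by (simp add: fragments_def)
  moreover have "z2 - y2 = c2" using \<open>z1 - y1 = c1\<close> ysplit csplit by (simp add: algebra_simps)
  moreover have "disjoint_el y2 c2"
    by (rule disjoint_el_mono[OF yc]) (simp_all add: y2_def c2_def bounds)
  ultimately show ?thesis using ysplit by (auto simp: fragments_def)
qed

lemma disjoint_sum_of_fragments: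
  assumes d: "disjoint_el z1 (z2::'a::vector_lattice)"
    and y1: "y1 \<in> fragments z1" and y2: "y2 \<in> fragments z2"
  shows "y1 + y2 \<in> fragments (z1 + z2)"
proof -
  note d' = d[unfolded disjoint_el_sym[of z1]]
  have "disjoint_el y1 (z1 - y1)" "disjoint_el y2 (z2 - y2)"
    using y1 y2 by (simp_all add: fragments_def)
  moreover have "disjoint_el y1 (z2 - y2)" "disjoint_el y2 (z1 - y1)"
    using disjoint_el_mono[OF d vabs_fragment_le[OF y1] vabs_fragment_diff_le[OF y2]]
      disjoint_el_mono[OF d' vabs_fragment_le[OF y2] vabs_fragment_diff_le[OF y1]] .
  ultimately have "disjoint_el (y1 + y2) ((z1 - y1) + (z2 - y2))"
    by (meson disjoint_el_add_left disjoint_el_sym)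
  thus ?thesis by (simp add: fragments_def algebra_simps)
qed

lemma fragments_add:
  assumes "disjoint_el z1 (z2::'a::vector_lattice)"
  shows "fragments (z1 + z2) = {y1 + y2 |y1 y2. y1 \<in> fragments z1 \<and> y2 \<in> fragments z2}"
  using fragment_of_disjoint_sum[OF assms] disjoint_sum_of_fragments[OF assms] by blast

section \<open>Ideals, bands and Dedekind completeness\<close>

lemma ideal_zero: "ideal_vl B \<Longrightarrow> 0 \<in> B"
  and ideal_add: "ideal_vl B \<Longrightarrow> x \<in> B \<Longrightarrow> y \<in> B \<Longrightarrow> x + y \<in> B"
  and ideal_scaleR: "ideal_vl B \<Longrightarrow> x \<in> B \<Longrightarrow> c *\<^sub>R x \<in> B"
  and ideal_solid: "ideal_vl B \<Longrightarrow> y \<in> B \<Longrightarrow> vabs x \<le> vabs y \<Longrightarrow> x \<in> B"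
  by (auto simp: ideal_vl_def)

lemma ideal_diff: "ideal_vl B \<Longrightarrow> x \<in> B \<Longrightarrow> y \<in> B \<Longrightarrow> x - y \<in> (B::'a::vector_lattice set)"
  using ideal_add[of B x "- y"] ideal_scaleR[of B y "- 1"] by simp

lemma ideal_disj_compl: "ideal_vl (disj_compl (A::'a::vector_lattice set))"
  unfolding ideal_vl_def disj_compl_def
proof (intro conjI ballI allI impI; clarsimp)
  fix x y z assume "\<forall>w\<in>A. disjoint_el w x" "\<forall>w\<in>A. disjoint_el w y" "z \<in> A"
  thus "disjoint_el z (x + y)" by (meson disjoint_el_add_left disjoint_el_sym)
next
  fix x c z assume "\<forall>w\<in>A. disjoint_el w x" "z \<in> A"
  thus "disjoint_el z (c *\<^sub>R x)" by (meson disjoint_el_scaleR_left disjoint_el_sym)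
next
  fix x y z assume "\<forall>w\<in>A. disjoint_el w y" "vabs x \<le> vabs y" "z \<in> A"
  thus "disjoint_el z x" by (meson disjoint_el_mono order_refl)
qed

lemma subset_disj_compl_disj_compl: "A \<subseteq> disj_compl (disj_compl A)"
  by (auto simp: disj_compl_def disjoint_el_sym)

lemma disj_compl_antimono: "A \<subseteq> A' \<Longrightarrow> disj_compl A' \<subseteq> disj_compl A"
  by (auto simp: disj_compl_def)

lemma disj_compl_triple: "disj_compl (disj_compl (disj_compl A)) = disj_compl A"
  by (meson disj_compl_antimono subset_disj_compl_disj_compl order.antisym)

lemma disj_compl_inter: "x \<in> B \<Longrightarrow> x \<in> disj_compl B \<Longrightarrow> x = (0::'a::vector_lattice)"
  by (auto simp: disj_compl_def intro: disjoint_el_self)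

definition is_lub :: "'a::order set \<Rightarrow> 'a \<Rightarrow> bool" where
  "is_lub A s \<longleftrightarrow> (\<forall>a\<in>A. a \<le> s) \<and> (\<forall>u. (\<forall>a\<in>A. a \<le> u) \<longrightarrow> s \<le> u)"

definition is_glb :: "'a::order set \<Rightarrow> 'a \<Rightarrow> bool" where
  "is_glb A s \<longleftrightarrow> (\<forall>a\<in>A. s \<le> a) \<and> (\<forall>u. (\<forall>a\<in>A. u \<le> a) \<longrightarrow> u \<le> s)"

lemma inf_pprt_lub_eq_0:
  assumes s: "is_lub A s" and w: "0 \<le> w" and A: "\<forall>a\<in>A. inf (vabs a) w = (0::'a::vector_lattice)"
  shows "inf (pprt s) w = 0"
proof -
  let ?t = "inf (pprt s) w"
  have "a \<le> pprt s - ?t" if a: "a \<in> A" for a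
  proof -
    have "inf (pprt a) ?t = 0"
      using A a w by (intro inf_eq_0_mono[OF zero_le_pprt _ pprt_le_vabs, of _ w]) simp_all
    hence "pprt a + ?t = sup (pprt a) ?t" using add_eq_inf_sup[of "pprt a" ?t] by simp
    also have "\<dots> \<le> pprt s" using s a by (simp add: is_lub_def)
    finally have "pprt a \<le> pprt s - ?t" by (simp only: le_diff_eq)
    moreover have "a \<le> pprt a" by (simp add: pprt_def)
    ultimately show ?thesis by (rule order_trans[rotated])
  qed
  hence "s \<le> pprt s - ?t" using s by (simp add: is_lub_def)
  hence "pprt s \<le> pprt s - ?t" by (simp add: pprt_def)
  thus ?thesis using w by (simp add: order.antisym)
qed

lemma band_lub: "band B \<Longrightarrow> A \<subseteq> B \<Longrightarrow> is_lub A s \<Longrightarrow> s \<in> B"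
  unfolding band_def is_lub_def by blast

lemma band_disj_compl: "band (disj_compl (X::'a::vector_lattice set))"
  unfolding band_def
proof (intro conjI allI impI)
  show "ideal_vl (disj_compl X)" by (rule ideal_disj_compl)
  fix A s assume "A \<subseteq> disj_compl X \<and> (\<forall>a\<in>A. a \<le> s) \<and> (\<forall>u. (\<forall>a\<in>A. a \<le> u) \<longrightarrow> s \<le> u)"
  hence A: "A \<subseteq> disj_compl X" and s: "is_lub A s" by (auto simp: is_lub_def)
  show "s \<in> disj_compl X"
    unfolding disj_compl_def mem_Collect_eq
  proof
    fix z assume "z \<in> X"
    with A have Az: "\<forall>a\<in>A. inf (vabs a) (vabs z) = 0"
      by (auto simp: disj_compl_def disjoint_el_def inf_commute)
    show "disjoint_el z s"
    proof (cases "A = {}")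
      case True
      hence "s \<le> s - vabs z" using s by (simp add: is_lub_def)
      hence "z = 0" by (simp add: vabs_le_0_imp_0)
      thus ?thesis by simp
    next
      case False
      then obtain a where a: "a \<in> A" by blast
      have "a \<le> s" using s a by (simp add: is_lub_def)
      hence "pprt (- s) \<le> pprt (- a)" by (simp add: pprt_mono)
      hence "pprt (- s) \<le> vabs a" using pprt_uminus_le_vabs[of a] by (rule order_trans)
      hence "inf (pprt (- s)) (vabs z) = 0"
        using Az a by (intro inf_eq_0_mono[OF zero_le_pprt vabs_nonneg _ order_refl]) auto
      with inf_pprt_lub_eq_0[OF s vabs_nonneg Az] have "inf (vabs s) (vabs z) = 0"
        unfolding vabs_eq_pprt_add[of s] by (simp add: inf_add_eq_0 vabs_nonneg)
      thus ?thesis by (simp add: disjoint_el_def inf_commute)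
    qed
  qed
qed

lemma dedekind_complete_lub:
  "dedekind_complete TYPE('a::vector_lattice) \<Longrightarrow> (A::'a set) \<noteq> {} \<Longrightarrow> \<forall>a\<in>A. a \<le> u \<Longrightarrow> \<exists>s. is_lub A s"
  unfolding dedekind_complete_def is_lub_def by blast

lemma dedekind_complete_glb:
  assumes dc: "dedekind_complete TYPE('a::vector_lattice)"
    and "(A::'a set) \<noteq> {}" "\<forall>a\<in>A. l \<le> a"
  shows "\<exists>s. is_glb A s"
proof -
  obtain s where s: "is_lub (uminus ` A) s"
    using dedekind_complete_lub[OF dc, of "uminus ` A" "- l"] assms by auto
  have "is_glb A (- s)"
    unfolding is_glb_def
  proof (intro conjI ballI allI impI)
    fix a assume "a \<in> A"
    thus "- s \<le> a" using s by (auto simp: is_lub_def minus_le_iff)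
  next
    fix u assume "\<forall>a\<in>A. u \<le> a"
    thus "u \<le> - s" using s by (auto simp: is_lub_def le_minus_iff)
  qed
  thus ?thesis by blast
qed

lemma is_glb_unique: "is_glb A a \<Longrightarrow> is_glb A b \<Longrightarrow> a = (b::'a::order)"
  unfolding is_glb_def by (meson order.antisym)

lemma is_glb_add:
  assumes "is_glb A a" "is_glb B (b::'a::vector_lattice)"
  shows "is_glb {x + y |x y. x \<in> A \<and> y \<in> B} (a + b)"
  unfolding is_glb_def
proof (intro conjI ballI allI impI)
  fix z assume "z \<in> {x + y |x y. x \<in> A \<and> y \<in> B}"
  thus "a + b \<le> z" using assms by (auto simp: is_glb_def intro: add_mono)
next
  fix l assume l: "\<forall>z\<in>{x + y |x y. x \<in> A \<and> y \<in> B}. l \<le> z"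
  have "l - a \<le> y" if "y \<in> B" for y
  proof -
    have "\<forall>x\<in>A. l - y \<le> x" using l that by (force simp: diff_le_eq)
    hence "l - y \<le> a" using assms(1) unfolding is_glb_def by blast
    thus ?thesis by (simp add: diff_le_eq add.commute)
  qed
  hence "l - a \<le> b" using assms(2) unfolding is_glb_def by blast
  thus "l \<le> a + b" by (simp add: diff_le_eq add.commute)
qed

lemma dedekind_complete_archimedean:
  assumes dc: "dedekind_complete TYPE('a::vector_lattice)"
    and "\<forall>n::nat. of_nat n *\<^sub>R v \<le> (w::'a)"
  shows "v \<le> 0"
proof -
  let ?A = "range (\<lambda>n::nat. of_nat n *\<^sub>R v)"
  obtain s where s: "is_lub ?A s" using dedekind_complete_lub[OF dc, of ?A w] assms by auto
  have "of_nat n *\<^sub>R v + v \<le> s" for n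
  proof -
    have "of_nat (Suc n) *\<^sub>R v \<le> s" using s unfolding is_lub_def by blast
    thus ?thesis by (simp add: scaleR_left_distrib add.commute)
  qed
  hence "\<forall>a\<in>?A. a \<le> s - v" by (auto simp: le_diff_eq)
  hence "s \<le> s - v" using s unfolding is_lub_def by blast
  thus ?thesis by simp
qed

lemma dedekind_complete_le_0_of_le_eps:
  assumes dc: "dedekind_complete TYPE('a::vector_lattice)"
    and w: "0 \<le> (w::'a)" and le: "\<forall>e::real. e > 0 \<longrightarrow> v \<le> e *\<^sub>R w"
  shows "v \<le> 0"
proof (rule dedekind_complete_archimedean[OF dc, of v w], rule allI)
  fix n :: nat
  show "of_nat n *\<^sub>R v \<le> w"
  proof (cases "n = 0")
    case False
    hence "v \<le> inverse (of_nat n) *\<^sub>R w" using le by simp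
    hence "of_nat n *\<^sub>R v \<le> of_nat n *\<^sub>R (inverse (of_nat n) *\<^sub>R w)"
      by (rule scaleR_left_mono) simp
    thus ?thesis using False by simp
  qed (use w in simp)
qed

section \<open>Band projections\<close>

lemma pprt_add_le: "pprt (a + b) \<le> pprt a + pprt (b::'a::vector_lattice)"
  unfolding pprt_def[of "a + b"] by (rule sup_least) (simp_all add: add_mono pprt_def)

locale band_proj =
  fixes B :: "'a::vector_lattice set" and P :: "'a \<Rightarrow> 'a"
  assumes projection_band: "projection_band B"
    and proj_in_band: "\<And>x. P x \<in> B"
    and diff_proj_in_disj_compl: "\<And>x. x - P x \<in> disj_compl B"
begin

lemma ideal_band: "ideal_vl B"
  using projection_band by (simp add: projection_band_def band_def)

lemma proj_of_decomp:
  assumes "b \<in> B" "c \<in> disj_compl B"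
  shows "P (b + c) = b"
proof -
  have "b - P (b + c) = ((b + c) - P (b + c)) - c" by simp
  hence "b - P (b + c) \<in> disj_compl B"
    using ideal_diff[OF ideal_disj_compl diff_proj_in_disj_compl assms(2)] by (simp only:)
  moreover have "b - P (b + c) \<in> B" using ideal_diff[OF ideal_band assms(1) proj_in_band] .
  ultimately show ?thesis using disj_compl_inter by fastforce
qed

lemma proj_fixes: "b \<in> B \<Longrightarrow> P b = b"
  using proj_of_decomp[of b 0, OF _ ideal_zero[OF ideal_disj_compl]] by simp

lemma proj_eq_0_iff: "P c = 0 \<longleftrightarrow> c \<in> disj_compl B"
  using proj_of_decomp[of 0 c] ideal_zero[OF ideal_band] diff_proj_in_disj_compl[of c] by auto

lemma proj_idem: "P (P x) = P x"
  by (rule proj_fixes[OF proj_in_band])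

lemma proj_add: "P (x + y) = P x + P y"
proof -
  have "P ((P x + P y) + ((x - P x) + (y - P y))) = P x + P y"
    by (intro proj_of_decomp ideal_add[OF ideal_band] ideal_add[OF ideal_disj_compl]
        proj_in_band diff_proj_in_disj_compl)
  thus ?thesis by simp
qed

lemma proj_scaleR: "P (c *\<^sub>R x) = c *\<^sub>R P x"
proof -
  have "P (c *\<^sub>R P x + c *\<^sub>R (x - P x)) = c *\<^sub>R P x"
    by (intro proj_of_decomp ideal_scaleR[OF ideal_band] ideal_scaleR[OF ideal_disj_compl]
        proj_in_band diff_proj_in_disj_compl)
  thus ?thesis by (simp add: scaleR_right_diff_distrib)
qed

lemma proj_diff: "P (x - y) = P x - P y"
  using proj_add[of x "- y"] proj_scaleR[of "- 1" y] by simp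

lemma proj_zero: "P 0 = 0"
  using proj_scaleR[of 0 0] by simp

lemma proj_nonneg:
  assumes "0 \<le> x"
  shows "0 \<le> P x" "0 \<le> x - P x"
proof -
  have "disjoint_el (P x) (x - P x)"
    using proj_in_band diff_proj_in_disj_compl by (auto simp: disj_compl_def)
  hence "x = vabs (P x) + vabs (x - P x)"
    using vabs_add_of_disjoint[of "P x" "x - P x"] vabs_of_nonneg[OF assms] by simp
  hence "(vabs (P x) - P x) + (vabs (x - P x) - (x - P x)) = 0" by (simp add: algebra_simps)
  moreover have "0 \<le> vabs (P x) - P x" "0 \<le> vabs (x - P x) - (x - P x)"
    by (simp_all add: vabs_ge)
  ultimately have "vabs (P x) - P x = 0 \<and> vabs (x - P x) - (x - P x) = 0"
    using add_nonneg_eq_0_iff by blast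
  thus "0 \<le> P x" "0 \<le> x - P x"
    using vabs_nonneg[of "P x"] vabs_nonneg[of "x - P x"] by simp_all
qed

lemma proj_le: "0 \<le> x \<Longrightarrow> P x \<le> x"
  using proj_nonneg(2) by simp

lemma proj_mono: "x \<le> y \<Longrightarrow> P x \<le> P y"
  using proj_nonneg(1)[of "y - x"] proj_diff[of y x] by simp

lemma proj_pprt_eq_0:
  assumes "P t \<le> 0"
  shows "P (pprt t) = 0"
proof -
  have "pprt t \<le> pprt (P t) + pprt (t - P t)"
    using pprt_add_le[of "P t" "t - P t"] by simp
  hence "vabs (pprt t) \<le> vabs (pprt (t - P t))" using assms by (simp add: vabs_pprt)
  moreover have "pprt (t - P t) \<in> disj_compl B"
    by (rule ideal_solid[OF ideal_disj_compl diff_proj_in_disj_compl[of t]])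
      (simp add: vabs_pprt pprt_le_vabs)
  ultimately have "pprt t \<in> disj_compl B" by (rule ideal_solid[OF ideal_disj_compl, rotated])
  thus ?thesis by (simp add: proj_eq_0_iff)
qed

lemma disj_compl_disj_compl_band: "disj_compl (disj_compl B) = B"
proof
  show "disj_compl (disj_compl B) \<subseteq> B"
  proof
    fix z assume z: "z \<in> disj_compl (disj_compl B)"
    have "P z \<in> disj_compl (disj_compl B)" using subset_disj_compl_disj_compl proj_in_band by blast
    hence "z - P z \<in> disj_compl (disj_compl B)" using ideal_diff[OF ideal_disj_compl z] by blast
    hence "z - P z = 0" using diff_proj_in_disj_compl disj_compl_inter by blast
    thus "z \<in> B" using proj_in_band[of z] by simp
  qed
qed (rule subset_disj_compl_disj_compl)

lemma band_proj_complement: "band_proj (disj_compl B) (\<lambda>x. x - P x)"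
proof
  show "projection_band (disj_compl B)"
    unfolding projection_band_def disj_compl_disj_compl_band
  proof (intro conjI allI band_disj_compl)
    fix x show "\<exists>b\<in>disj_compl B. x - b \<in> B"
      using diff_proj_in_disj_compl[of x] proj_in_band[of x] by (intro bexI[of _ "x - P x"]) simp_all
  qed
qed (simp_all add: diff_proj_in_disj_compl proj_in_band disj_compl_disj_compl_band)

lemma band_projection: "band_projection P"
  unfolding band_projection_def using projection_band proj_in_band diff_proj_in_disj_compl by blast

end

lemma band_projection_imp_band_proj: "band_projection \<rho> \<Longrightarrow> \<exists>B. band_proj B \<rho>"
  unfolding band_projection_def band_proj_def by blast

lemma bp_le_iff: "bp_le \<rho> \<pi> \<longleftrightarrow> (\<forall>z. \<rho> (\<pi> z) = \<rho> z)"
  by (auto simp: bp_le_def fun_eq_iff)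

subsection \<open>Principal bands\<close>

definition principal_band :: "'a::vector_lattice \<Rightarrow> 'a set" where
  "principal_band d = disj_compl (disj_compl {d})"

lemma mem_principal_band: "d \<in> principal_band d"
  unfolding principal_band_def using subset_disj_compl_disj_compl by blast

lemma disj_compl_principal_band: "disj_compl (principal_band d) = disj_compl {d}"
  unfolding principal_band_def by (rule disj_compl_triple)

lemma principal_band_subset_disj_compl:
  "d \<in> disj_compl B \<Longrightarrow> principal_band d \<subseteq> disj_compl (B::'a::vector_lattice set)"
  unfolding principal_band_def
  by (rule disj_compl_antimono) (auto simp: disj_compl_def disjoint_el_sym)

text \<open>The component of \<open>x \<ge> 0\<close> in the principal band of \<open>d\<close> is \<open>sup\<^sub>n (inf x (n vabs d))\<close>.\<close>

lemma principal_band_decomp_nonneg: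
  assumes dc: "dedekind_complete TYPE('a::vector_lattice)" and x: "0 \<le> (x::'a)"
  shows "\<exists>b\<in>principal_band d. x - b \<in> disj_compl {d}"
proof -
  let ?u = "vabs d"
  let ?e = "\<lambda>n::nat. inf x (of_nat n *\<^sub>R ?u)"
  obtain b where b: "is_lub (range ?e) b" using dedekind_complete_lub[OF dc, of "range ?e" x] by auto
  have eb: "?e n \<le> b" for n using b by (auto simp: is_lub_def)
  have ideal: "ideal_vl (principal_band d)" unfolding principal_band_def by (rule ideal_disj_compl)
  have "?e n \<in> principal_band d" for n
  proof (rule ideal_solid[OF ideal ideal_scaleR[OF ideal mem_principal_band]])
    show "vabs (?e n) \<le> vabs (of_nat n *\<^sub>R d)"
      using x by (simp add: vabs_of_nonneg vabs_nonneg vabs_scaleR scaleR_nonneg_nonneg)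
  qed
  hence "range ?e \<subseteq> principal_band d" by blast
  hence b_band: "b \<in> principal_band d"
    unfolding principal_band_def by (rule band_lub[OF band_disj_compl _ b])
  have bx: "b \<le> x" using b by (auto simp: is_lub_def)
  let ?t = "inf (x - b) ?u"
  have "?e n \<le> b - ?t" for n
  proof -
    have "?e n + ?t \<le> b + (x - b)" by (rule add_mono[OF eb inf_le1])
    moreover have "?e n + ?t \<le> of_nat n *\<^sub>R ?u + ?u" by (rule add_mono) simp_all
    ultimately have "?e n + ?t \<le> ?e (Suc n)" by (simp add: scaleR_left_distrib add.commute)
    also have "\<dots> \<le> b" by (rule eb)
    finally show ?thesis by (simp only: le_diff_eq)
  qed
  hence "b \<le> b - ?t" using b unfolding is_lub_def by blast
  moreover have "0 \<le> ?t" using bx by (simp add: vabs_nonneg)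
  ultimately have "?t = 0" by simp
  hence "disjoint_el d (x - b)"
    using bx by (simp add: disjoint_el_def inf_commute vabs_of_nonneg)
  thus ?thesis using b_band by (auto simp: disj_compl_def)
qed

lemma projection_band_principal_band:
  assumes dc: "dedekind_complete TYPE('a::vector_lattice)"
  shows "projection_band (principal_band (d::'a))"
  unfolding projection_band_def
proof (intro conjI allI)
  show "band (principal_band d)" unfolding principal_band_def by (rule band_disj_compl)
  fix x :: 'a
  obtain b1 where b1: "b1 \<in> principal_band d" "pprt x - b1 \<in> disj_compl {d}"
    using principal_band_decomp_nonneg[OF dc zero_le_pprt] by blast
  obtain b2 where b2: "b2 \<in> principal_band d" "pprt (- x) - b2 \<in> disj_compl {d}"
    using principal_band_decomp_nonneg[OF dc zero_le_pprt] by blast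
  have "x - (b1 - b2) = (pprt x - b1) - (pprt (- x) - b2)"
    using pprt_diff_pprt_uminus[of x] by (simp add: algebra_simps)
  hence "x - (b1 - b2) \<in> disj_compl (principal_band d)"
    unfolding disj_compl_principal_band using ideal_diff[OF ideal_disj_compl b1(2) b2(2)] by (simp only:)
  moreover have "b1 - b2 \<in> principal_band d"
    using b1(1) b2(1) unfolding principal_band_def by (rule ideal_diff[OF ideal_disj_compl])
  ultimately show "\<exists>b\<in>principal_band d. x - b \<in> disj_compl (principal_band d)" by blast
qed

definition principal_proj :: "'a::vector_lattice \<Rightarrow> 'a \<Rightarrow> 'a" where
  "principal_proj d x = (SOME b. b \<in> principal_band d \<and> x - b \<in> disj_compl (principal_band d))"

lemma band_proj_principal_proj:
  assumes dc: "dedekind_complete TYPE('a::vector_lattice)"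
  shows "band_proj (principal_band (d::'a)) (principal_proj d)"
proof
  show pb: "projection_band (principal_band d)" by (rule projection_band_principal_band[OF dc])
  fix x
  have "\<exists>b. b \<in> principal_band d \<and> x - b \<in> disj_compl (principal_band d)"
    using pb unfolding projection_band_def by blast
  hence "principal_proj d x \<in> principal_band d \<and> x - principal_proj d x \<in> disj_compl (principal_band d)"
    unfolding principal_proj_def by (rule someI_ex)
  thus "principal_proj d x \<in> principal_band d" "x - principal_proj d x \<in> disj_compl (principal_band d)"
    by auto
qed

context
  fixes d :: "'a::vector_lattice"
  assumes dc: "dedekind_complete TYPE('a)"
begin

interpretation principal: band_proj "principal_band d" "principal_proj d"
  by (rule band_proj_principal_proj[OF dc])

lemma principal_proj_self: "principal_proj d d = d"
  by (rule principal.proj_fixes[OF mem_principal_band])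

lemma principal_proj_disjoint: "disjoint_el d v \<Longrightarrow> principal_proj d v = 0"
  unfolding principal.proj_eq_0_iff disj_compl_principal_band by (simp add: disj_compl_def)

lemma principal_proj_band_of_disj_compl:
  "d \<in> disj_compl B \<Longrightarrow> v \<in> B \<Longrightarrow> principal_proj d v = 0"
  using principal_proj_disjoint by (auto simp: disj_compl_def disjoint_el_sym)

end

lemma principal_proj_pprt:
  assumes dc: "dedekind_complete TYPE('a::vector_lattice)"
  shows "principal_proj (pprt t) t = pprt (t::'a)"
proof -
  interpret band_proj "principal_band (pprt t)" "principal_proj (pprt t)"
    by (rule band_proj_principal_proj[OF dc])
  have "disjoint_el (pprt t) (pprt (- t))"
    using inf_pprt_pprt_uminus[of t] by (simp add: disjoint_el_def vabs_pprt)
  hence "principal_proj (pprt t) (pprt (- t)) = 0" by (rule principal_proj_disjoint[OF dc])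
  thus ?thesis
    using proj_diff[of "pprt t" "pprt (- t)"] principal_proj_self[OF dc, of "pprt t"]
    by (simp add: pprt_diff_pprt_uminus)
qed

section \<open>Partitions of unity\<close>

context
  fixes \<Delta> :: "'i set" and \<rho> :: "'i \<Rightarrow> 'a::vector_lattice \<Rightarrow> 'a"
  assumes dc: "dedekind_complete TYPE('a)" and pu: "partition_of_unity \<Delta> \<rho>"
begin

lemma partition_of_unity_band_proj: "\<alpha> \<in> \<Delta> \<Longrightarrow> \<exists>B. band_proj B (\<rho> \<alpha>)"
  using pu band_projection_imp_band_proj unfolding partition_of_unity_def by blast

text \<open>If every \<open>\<rho> \<alpha>\<close> kills \<open>u\<close>, the complement of the principal projection of \<open>u\<close> dominates
  all \<open>\<rho> \<alpha>\<close>, hence is the identity.\<close>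

lemma partition_of_unity_eq_0:
  assumes "\<forall>\<alpha>\<in>\<Delta>. \<rho> \<alpha> u = 0"
  shows "u = 0"
proof -
  interpret U: band_proj "principal_band u" "principal_proj u"
    by (rule band_proj_principal_proj[OF dc])
  have "bp_le (\<rho> \<alpha>) (\<lambda>z. z - principal_proj u z)" if \<alpha>: "\<alpha> \<in> \<Delta>" for \<alpha>
    unfolding bp_le_iff
  proof
    fix z
    obtain B where "band_proj B (\<rho> \<alpha>)" using partition_of_unity_band_proj[OF \<alpha>] ..
    then interpret band_proj B "\<rho> \<alpha>" .
    have "principal_band u \<subseteq> disj_compl B"
      using assms \<alpha> proj_eq_0_iff by (intro principal_band_subset_disj_compl) auto
    hence "\<rho> \<alpha> (principal_proj u z) = 0" using U.proj_in_band proj_eq_0_iff by blast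
    thus "\<rho> \<alpha> (z - principal_proj u z) = \<rho> \<alpha> z" by (simp add: proj_diff)
  qed
  moreover have "band_projection (\<lambda>z. z - principal_proj u z)"
    using U.band_proj_complement by (rule band_proj.band_projection)
  ultimately have "(\<lambda>z. z - principal_proj u z) = id"
    using pu unfolding partition_of_unity_def by blast
  hence "u - principal_proj u u = u" by (metis id_apply)
  thus ?thesis using principal_proj_self[OF dc] by simp
qed

lemma partition_of_unity_le:
  assumes "\<forall>\<alpha>\<in>\<Delta>. \<rho> \<alpha> v \<le> w"
  shows "v \<le> w"
proof -
  have "\<rho> \<alpha> (pprt (v - w)) = 0" if \<alpha>: "\<alpha> \<in> \<Delta>" for \<alpha>
  proof -
    obtain B where "band_proj B (\<rho> \<alpha>)" using partition_of_unity_band_proj[OF \<alpha>] ..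
    then interpret band_proj B "\<rho> \<alpha>" .
    have "\<rho> \<alpha> (\<rho> \<alpha> v) \<le> \<rho> \<alpha> w" using assms \<alpha> by (simp add: proj_mono)
    thus ?thesis by (intro proj_pprt_eq_0) (simp add: proj_diff proj_idem)
  qed
  hence "pprt (v - w) = 0" by (intro partition_of_unity_eq_0) blast
  thus ?thesis by (simp add: le_zero_iff_zero_pprt[symmetric])
qed

end

section \<open>Orthogonally additive operators\<close>

lemma orth_additive_zero: "orth_additive T \<Longrightarrow> T 0 = 0"
  unfolding orth_additive_def by (metis add.right_neutral add_left_cancel disjoint_el_zero(1))

lemma orth_additive_fragment:
  assumes "orth_additive T" "y \<in> fragments x"
  shows "T x = T y + T (x - y)"
proof -
  have "T (y + (x - y)) = T y + T (x - y)"
    using assms unfolding orth_additive_def fragments_def by blast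
  thus ?thesis by simp
qed

lemma U_posD:
  assumes "S \<in> U_pos"
  shows "orth_additive S" "order_bounded_op S" "0 \<le> S z"
  using assms by (auto simp: U_pos_def U_ops_def U_le_def)

lemma zero_in_U_ops: "(\<lambda>_. 0) \<in> U_ops"
  unfolding U_ops_def orth_additive_def order_bounded_op_def order_bounded_set_def
  by (auto intro!: exI[of _ 0])

definition fragment_partition ::
    "('e::vector_lattice \<Rightarrow> 'f::vector_lattice) \<Rightarrow> ('e \<Rightarrow> 'f) \<Rightarrow> 'e \<Rightarrow> real \<Rightarrow> bool" where
  "fragment_partition S T x \<epsilon> \<longleftrightarrow>
    (\<exists>(\<Delta>::'f set) (\<rho>::'f \<Rightarrow> 'f \<Rightarrow> 'f) (xs::'f \<Rightarrow> 'e).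
       partition_of_unity \<Delta> \<rho> \<and> (\<forall>\<alpha>\<in>\<Delta>. xs \<alpha> \<in> fragments x) \<and>
       (\<forall>\<alpha>\<in>\<Delta>. \<rho> \<alpha> (T (xs \<alpha>)) \<le> \<epsilon> *\<^sub>R T x \<and> \<rho> \<alpha> (S (x - xs \<alpha>)) \<le> \<epsilon> *\<^sub>R S x))"

section \<open>Fragment partitions force disjointness\<close>

lemma U_inf_zero_if_fragment_partition:
  fixes S T :: "'e::vector_lattice \<Rightarrow> 'f::vector_lattice"
  assumes dc: "dedekind_complete TYPE('f)" and S: "S \<in> U_pos" and T: "T \<in> U_pos"
    and fp: "\<And>x \<epsilon>. \<epsilon> > 0 \<Longrightarrow> fragment_partition S T x \<epsilon>"
  shows "U_inf_is S T (\<lambda>_. 0)"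
  unfolding U_inf_is_def
proof (intro conjI ballI impI zero_in_U_ops)
  show "U_le (\<lambda>_. 0) S" "U_le (\<lambda>_. 0) T"
    using U_posD(3)[OF S] U_posD(3)[OF T] by (simp_all add: U_le_def)
  fix Q assume "Q \<in> U_ops" and "U_le Q S \<and> U_le Q T"
  hence Q: "orth_additive Q" and QS: "Q z \<le> S z" and QT: "Q z \<le> T z" for z
    by (auto simp: U_ops_def U_le_def)
  show "U_le Q (\<lambda>_. 0)"
    unfolding U_le_def
  proof
    fix x
    have "Q x \<le> \<epsilon> *\<^sub>R (T x + S x)" if \<epsilon>: "\<epsilon> > 0" for \<epsilon>
    proof -
      obtain \<Delta> and \<rho> :: "'f \<Rightarrow> 'f \<Rightarrow> 'f" and xs where pu: "partition_of_unity \<Delta> \<rho>"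
        and xs: "\<forall>\<alpha>\<in>\<Delta>. xs \<alpha> \<in> fragments x"
        and bounds: "\<forall>\<alpha>\<in>\<Delta>. \<rho> \<alpha> (T (xs \<alpha>)) \<le> \<epsilon> *\<^sub>R T x \<and> \<rho> \<alpha> (S (x - xs \<alpha>)) \<le> \<epsilon> *\<^sub>R S x"
        using fp[OF \<epsilon>] unfolding fragment_partition_def by blast
      have "\<rho> \<alpha> (Q x) \<le> \<epsilon> *\<^sub>R (T x + S x)" if \<alpha>: "\<alpha> \<in> \<Delta>" for \<alpha>
      proof -
        obtain B where "band_proj B (\<rho> \<alpha>)" using partition_of_unity_band_proj[OF dc pu \<alpha>] ..
        then interpret band_proj B "\<rho> \<alpha>" .
        have "Q x = Q (xs \<alpha>) + Q (x - xs \<alpha>)"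
          using orth_additive_fragment[OF Q] xs \<alpha> by blast
        also have "\<dots> \<le> T (xs \<alpha>) + S (x - xs \<alpha>)" by (rule add_mono[OF QT QS])
        finally have "\<rho> \<alpha> (Q x) \<le> \<rho> \<alpha> (T (xs \<alpha>) + S (x - xs \<alpha>))" by (rule proj_mono)
        also have "\<dots> = \<rho> \<alpha> (T (xs \<alpha>)) + \<rho> \<alpha> (S (x - xs \<alpha>))" by (rule proj_add)
        also have "\<dots> \<le> \<epsilon> *\<^sub>R (T x + S x)"
          using bounds \<alpha> by (simp add: add_mono scaleR_right_distrib)
        finally show ?thesis .
      qed
      thus ?thesis by (rule partition_of_unity_le[OF dc pu, rule_format])
    qed
    moreover have "0 \<le> T x + S x" using U_posD(3)[OF S] U_posD(3)[OF T] by (simp add: add_nonneg_nonneg)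
    ultimately have "Q x \<le> 0" using dedekind_complete_le_0_of_le_eps[OF dc] by blast
    thus "0 \<le> 0 - Q x" by simp
  qed
qed

section \<open>The fragment infimum\<close>

text \<open>\<open>fragment_inf S T\<close> is the usual formula for \<open>S \<and> T\<close> in \<open>U(E,F)\<close>; all that is needed here is
  that it is a lower bound of \<open>S\<close> and \<open>T\<close> in \<open>U(E,F)\<close>.\<close>

definition fragment_sums :: "('e::vector_lattice \<Rightarrow> 'f::vector_lattice) \<Rightarrow> ('e \<Rightarrow> 'f) \<Rightarrow> 'e \<Rightarrow> 'f set" where
  "fragment_sums S T z = {T y + S (z - y) |y. y \<in> fragments z}"

definition fragment_inf :: "('e::vector_lattice \<Rightarrow> 'f::vector_lattice) \<Rightarrow> ('e \<Rightarrow> 'f) \<Rightarrow> 'e \<Rightarrow> 'f" where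
  "fragment_inf S T z = (SOME q. is_glb (fragment_sums S T z) q)"

context
  fixes S T :: "'e::vector_lattice \<Rightarrow> 'f::vector_lattice"
  assumes dc: "dedekind_complete TYPE('f)" and S: "S \<in> U_pos" and T: "T \<in> U_pos"
begin

lemma fragment_sums_nonneg: "a \<in> fragment_sums S T z \<Longrightarrow> 0 \<le> a"
  unfolding fragment_sums_def using U_posD(3)[OF S] U_posD(3)[OF T] by (auto intro: add_nonneg_nonneg)

lemma fragment_sums_bounds: "T z \<in> fragment_sums S T z" "S z \<in> fragment_sums S T z"
  using fragments_self[of z] fragments_zero[of z]
    orth_additive_zero[OF U_posD(1)[OF S]] orth_additive_zero[OF U_posD(1)[OF T]]
  unfolding fragment_sums_def by force+

lemma is_glb_fragment_inf: "is_glb (fragment_sums S T z) (fragment_inf S T z)"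
proof -
  obtain q where "is_glb (fragment_sums S T z) q"
    using dedekind_complete_glb[OF dc, of "fragment_sums S T z" 0] fragment_sums_nonneg fragment_sums_bounds
    by blast
  thus ?thesis unfolding fragment_inf_def by (rule someI)
qed

lemma fragment_inf_nonneg: "0 \<le> fragment_inf S T z"
  using is_glb_fragment_inf[of z] fragment_sums_nonneg unfolding is_glb_def by blast

lemma fragment_inf_le: "fragment_inf S T z \<le> T z" "fragment_inf S T z \<le> S z"
  using is_glb_fragment_inf[of z] fragment_sums_bounds unfolding is_glb_def by blast+

lemma fragment_sum_add:
  assumes d: "disjoint_el z1 z2" and y1: "y1 \<in> fragments z1" and y2: "y2 \<in> fragments z2"
  shows "T (y1 + y2) + S (z1 + z2 - (y1 + y2)) = (T y1 + S (z1 - y1)) + (T y2 + S (z2 - y2))"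
proof -
  have "T (y1 + y2) = T y1 + T y2"
    using U_posD(1)[OF T] disjoint_el_mono[OF d vabs_fragment_le[OF y1] vabs_fragment_le[OF y2]]
    unfolding orth_additive_def by blast
  moreover have "S ((z1 - y1) + (z2 - y2)) = S (z1 - y1) + S (z2 - y2)"
    using U_posD(1)[OF S] disjoint_el_mono[OF d vabs_fragment_diff_le[OF y1] vabs_fragment_diff_le[OF y2]]
    unfolding orth_additive_def by blast
  moreover have "z1 + z2 - (y1 + y2) = (z1 - y1) + (z2 - y2)" by simp
  ultimately show ?thesis by (simp only: add_ac)
qed

lemma fragment_sums_add:
  assumes "disjoint_el z1 z2"
  shows "fragment_sums S T (z1 + z2) = {a + b |a b. a \<in> fragment_sums S T z1 \<and> b \<in> fragment_sums S T z2}"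
proof (intro set_eqI iffI)
  fix g assume "g \<in> fragment_sums S T (z1 + z2)"
  then obtain y1 y2 where y: "y1 \<in> fragments z1" "y2 \<in> fragments z2"
    and "g = T (y1 + y2) + S (z1 + z2 - (y1 + y2))"
  proof -
    obtain y where "y \<in> fragments (z1 + z2)" "g = T y + S (z1 + z2 - y)"
      using \<open>g \<in> fragment_sums S T (z1 + z2)\<close> unfolding fragment_sums_def by blast
    thus thesis using that unfolding fragments_add[OF assms] by blast
  qed
  hence "g = (T y1 + S (z1 - y1)) + (T y2 + S (z2 - y2))" using fragment_sum_add[OF assms y] by simp
  thus "g \<in> {a + b |a b. a \<in> fragment_sums S T z1 \<and> b \<in> fragment_sums S T z2}"
    using y unfolding fragment_sums_def by blast
next
  fix g assume "g \<in> {a + b |a b. a \<in> fragment_sums S T z1 \<and> b \<in> fragment_sums S T z2}"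
  then obtain y1 y2 where y: "y1 \<in> fragments z1" "y2 \<in> fragments z2"
    and "g = (T y1 + S (z1 - y1)) + (T y2 + S (z2 - y2))"
    unfolding fragment_sums_def by blast
  hence "g = T (y1 + y2) + S (z1 + z2 - (y1 + y2))" using fragment_sum_add[OF assms y] by simp
  moreover have "y1 + y2 \<in> fragments (z1 + z2)" by (rule disjoint_sum_of_fragments[OF assms y])
  ultimately show "g \<in> fragment_sums S T (z1 + z2)" unfolding fragment_sums_def by blast
qed

lemma fragment_inf_in_U_ops: "fragment_inf S T \<in> U_ops"
  unfolding U_ops_def
proof (intro CollectI conjI)
  show "orth_additive (fragment_inf S T)"
    unfolding orth_additive_def
  proof (intro allI impI)
    fix z1 z2 :: 'e assume "disjoint_el z1 z2"
    have "is_glb (fragment_sums S T (z1 + z2)) (fragment_inf S T z1 + fragment_inf S T z2)"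
      unfolding fragment_sums_add[OF \<open>disjoint_el z1 z2\<close>]
      by (rule is_glb_add[OF is_glb_fragment_inf is_glb_fragment_inf])
    thus "fragment_inf S T (z1 + z2) = fragment_inf S T z1 + fragment_inf S T z2"
      by (rule is_glb_unique[OF is_glb_fragment_inf])
  qed
  show "order_bounded_op (fragment_inf S T)"
    unfolding order_bounded_op_def
  proof (intro allI impI)
    fix A :: "'e set" assume "order_bounded_set A"
    hence "order_bounded_set (T ` A)" by (rule U_posD(2)[OF T, unfolded order_bounded_op_def, rule_format])
    then obtain a b where b: "\<forall>x\<in>T ` A. a \<le> x \<and> x \<le> b" unfolding order_bounded_set_def by blast
    have "\<forall>x\<in>fragment_inf S T ` A. 0 \<le> x \<and> x \<le> b"
    proof
      fix q assume "q \<in> fragment_inf S T ` A"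
      then obtain z where "z \<in> A" and q: "q = fragment_inf S T z" by blast
      hence "T z \<le> b" using b by blast
      thus "0 \<le> q \<and> q \<le> b" unfolding q using fragment_inf_nonneg order_trans[OF fragment_inf_le(1)] by blast
    qed
    thus "order_bounded_set (fragment_inf S T ` A)" unfolding order_bounded_set_def by blast
  qed
qed

context
  assumes disjoint: "U_inf_is S T (\<lambda>_. 0)"
begin

lemma fragment_inf_eq_0: "fragment_inf S T x = 0"
proof -
  have "U_le (fragment_inf S T) (\<lambda>_. 0)"
    using disjoint fragment_inf_in_U_ops fragment_inf_le unfolding U_inf_is_def U_le_def by auto
  thus ?thesis using fragment_inf_nonneg[of x] by (simp add: U_le_def order.antisym)
qed

lemma exists_fragment_sum_not_ge:
  assumes "0 \<le> w" "w \<noteq> 0"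
  shows "\<exists>y\<in>fragments x. \<not> w \<le> T y + S (x - y)"
proof (rule ccontr)
  assume "\<not> ?thesis"
  hence "w \<le> fragment_inf S T x"
    using is_glb_fragment_inf[of x] unfolding is_glb_def fragment_sums_def by blast
  thus False using assms fragment_inf_eq_0 by simp
qed

lemma exists_principal_proj_le:
  assumes w: "0 \<le> w" "w \<noteq> 0"
  shows "\<exists>d. d \<noteq> 0 \<and> vabs d \<le> w \<and>
    (\<exists>y\<in>fragments x. principal_proj d (T y) \<le> w \<and> principal_proj d (S (x - y)) \<le> w)"
proof -
  obtain y where y: "y \<in> fragments x" and not_ge: "\<not> w \<le> T y + S (x - y)"
    using exists_fragment_sum_not_ge[OF w] by blast
  let ?A = "T y + S (x - y)"
  define d where "d = pprt (w - ?A)"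
  interpret P: band_proj "principal_band d" "principal_proj d" by (rule band_proj_principal_proj[OF dc])
  have T0: "0 \<le> T y" and S0: "0 \<le> S (x - y)" using U_posD(3) S T by blast+
  have "d \<noteq> 0" using not_ge by (simp add: d_def le_zero_iff_zero_pprt[symmetric])
  moreover have "vabs d \<le> w"
    unfolding d_def vabs_pprt unfolding pprt_def
    using w T0 S0 by (simp add: add_nonneg_nonneg order_trans[of "- T y" 0])
  moreover have "principal_proj d ?A \<le> w"
  proof -
    have "principal_proj d (w - ?A) = d" unfolding d_def by (rule principal_proj_pprt[OF dc])
    hence "principal_proj d ?A = principal_proj d w - d" by (simp add: P.proj_diff algebra_simps)
    also have "\<dots> \<le> w" using P.proj_le[OF w(1)] by (simp add: d_def diff_le_eq add_increasing2)
    finally show ?thesis .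
  qed
  moreover have "principal_proj d (T y) \<le> principal_proj d ?A"
    and "principal_proj d (S (x - y)) \<le> principal_proj d ?A"
    using T0 S0 by (simp_all add: P.proj_mono)
  ultimately show ?thesis using y by (blast intro: order_trans)
qed

end

end

section \<open>Exhaustion by principal projections\<close>

lemma principal_proj_orthogonal:
  assumes dc: "dedekind_complete TYPE('a::vector_lattice)"
    and \<pi>: "band_proj B \<pi>" and \<rho>: "band_projection \<rho>" and le: "bp_le \<rho> \<pi>"
    and d: "d \<in> disj_compl (B::'a set)"
  shows "principal_proj d \<circ> \<rho> = (\<lambda>_. 0)" "\<rho> \<circ> principal_proj d = (\<lambda>_. 0)"
proof -
  interpret band_proj B \<pi> by (rule \<pi>)
  obtain R where "band_proj R \<rho>" using band_projection_imp_band_proj[OF \<rho>] ..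
  then interpret R: band_proj R \<rho> .
  interpret D: band_proj "principal_band d" "principal_proj d" by (rule band_proj_principal_proj[OF dc])
  have kill: "\<rho> c = 0" if "c \<in> disj_compl B" for c
    using le that R.proj_zero by (metis bp_le_iff proj_eq_0_iff)
  hence "disj_compl B \<subseteq> disj_compl R" using R.proj_eq_0_iff by blast
  hence "R \<subseteq> B"
    using disj_compl_antimono R.disj_compl_disj_compl_band disj_compl_disj_compl_band by metis
  hence "principal_proj d (\<rho> z) = 0" for z
    using principal_proj_band_of_disj_compl[OF dc d] R.proj_in_band by blast
  moreover have "\<rho> (principal_proj d z) = 0" for z
    using kill principal_band_subset_disj_compl[OF d] D.proj_in_band by blast
  ultimately show "principal_proj d \<circ> \<rho> = (\<lambda>_. 0)" "\<rho> \<circ> principal_proj d = (\<lambda>_. 0)"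
    by (simp_all add: fun_eq_iff)
qed

text \<open>Each member of \<open>M\<close> is indexed by a nonzero vector of its range, so the index set lives in
  the space itself.\<close>

lemma partition_of_unity_of_maximal:
  fixes M :: "('a::vector_lattice \<Rightarrow> 'a) set"
  assumes M: "\<And>\<rho>. \<rho> \<in> M \<Longrightarrow> band_projection \<rho> \<and> \<rho> \<noteq> (\<lambda>_. 0)"
    and orth: "pairwise (\<lambda>\<rho>1 \<rho>2. \<rho>1 \<circ> \<rho>2 = (\<lambda>_. 0)) M"
    and max: "\<And>\<pi>. band_projection \<pi> \<Longrightarrow> \<forall>\<rho>\<in>M. bp_le \<rho> \<pi> \<Longrightarrow> \<pi> = id"
  shows "\<exists>(\<Delta>::'a set) \<rho>. partition_of_unity \<Delta> \<rho> \<and> \<rho> ` \<Delta> = M"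
proof -
  define idx where "idx \<rho> = \<rho> (SOME z. \<rho> z \<noteq> 0)" for \<rho> :: "'a \<Rightarrow> 'a"
  have idx_fixed: "\<rho> (idx \<rho>) = idx \<rho> \<and> idx \<rho> \<noteq> 0" if \<rho>: "\<rho> \<in> M" for \<rho>
  proof -
    obtain R where "band_proj R \<rho>" using M[OF \<rho>] band_projection_imp_band_proj by blast
    hence "\<rho> (idx \<rho>) = idx \<rho>" unfolding idx_def by (rule band_proj.proj_idem)
    moreover have "\<exists>z. \<rho> z \<noteq> 0" using M[OF \<rho>] by (auto simp: fun_eq_iff)
    hence "idx \<rho> \<noteq> 0" unfolding idx_def by (rule someI_ex)
    ultimately show ?thesis ..
  qed
  have "inj_on idx M"
  proof (rule inj_onI, rule ccontr)
    fix \<rho>1 \<rho>2 assume "\<rho>1 \<in> M" "\<rho>2 \<in> M" "idx \<rho>1 = idx \<rho>2" "\<rho>1 \<noteq> \<rho>2"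
    hence "\<rho>1 (idx \<rho>2) = 0" using orth idx_fixed unfolding pairwise_def by (metis comp_apply)
    thus False using idx_fixed[OF \<open>\<rho>1 \<in> M\<close>] \<open>idx \<rho>1 = idx \<rho>2\<close> by simp
  qed
  hence bij: "bij_betw idx M (idx ` M)" by (simp add: bij_betw_def)
  let ?\<rho> = "inv_into M idx"
  have range: "?\<rho> ` idx ` M = M" using bij by (simp add: bij_betw_inv_into[THEN bij_betw_imp_surj_on])
  have "partition_of_unity (idx ` M) ?\<rho>"
    unfolding partition_of_unity_def
  proof (intro conjI ballI impI allI)
    fix \<alpha> assume "\<alpha> \<in> idx ` M"
    thus "band_projection (?\<rho> \<alpha>)" using M range by blast
  next
    fix \<alpha> \<beta> assume "\<alpha> \<in> idx ` M" "\<beta> \<in> idx ` M" "\<alpha> \<noteq> \<beta>"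
    thus "?\<rho> \<alpha> \<circ> ?\<rho> \<beta> = (\<lambda>_. 0)"
      using orth inv_into_into[of _ idx M] f_inv_into_f[of _ idx M] unfolding pairwise_def by metis
  next
    fix \<pi> assume \<pi>: "band_projection \<pi> \<and> (\<forall>\<alpha>\<in>idx ` M. bp_le (?\<rho> \<alpha>) \<pi>)"
    hence "\<forall>\<rho>\<in>M. bp_le \<rho> \<pi>" using \<open>inj_on idx M\<close> by (metis image_eqI inv_into_f_f)
    thus "\<pi> = id" using max \<pi> by blast
  qed
  with range show ?thesis by blast
qed

lemma exhaustion_by_principal_projs:
  assumes dc: "dedekind_complete TYPE('a::vector_lattice)"
    and good: "\<And>(B::'a set) \<pi>. band_proj B \<pi> \<Longrightarrow> \<pi> \<noteq> id \<Longrightarrow>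
      \<exists>d. d \<noteq> 0 \<and> d \<in> disj_compl B \<and> P (principal_proj d)"
  shows "\<exists>(\<Delta>::'a set) \<rho>. partition_of_unity \<Delta> \<rho> \<and> (\<forall>\<alpha>\<in>\<Delta>. P (\<rho> \<alpha>))"
proof -
  define G where "G = {\<rho>::'a \<Rightarrow> 'a. band_projection \<rho> \<and> \<rho> \<noteq> (\<lambda>_. 0) \<and> P \<rho>}"
  define \<A> where "\<A> = {M. M \<subseteq> G \<and> pairwise (\<lambda>\<rho>1 \<rho>2. \<rho>1 \<circ> \<rho>2 = (\<lambda>_. 0)) M}"
  have "\<forall>C\<in>chains \<A>. \<Union>C \<in> \<A>"
    unfolding \<A>_def chains_def by (auto intro: pairwise_chain_Union)
  then obtain M where "M \<in> \<A>" and M_max: "\<forall>X\<in>\<A>. M \<subseteq> X \<longrightarrow> X = M" by (auto dest: Zorn_Lemma)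
  hence MG: "M \<subseteq> G" and orth: "pairwise (\<lambda>\<rho>1 \<rho>2. \<rho>1 \<circ> \<rho>2 = (\<lambda>_. 0)) M"
    by (simp_all add: \<A>_def)
  have max: "\<pi> = id" if \<pi>: "band_projection \<pi>" and dom: "\<forall>\<rho>\<in>M. bp_le \<rho> \<pi>" for \<pi>
  proof (rule ccontr)
    assume "\<pi> \<noteq> id"
    obtain B where B: "band_proj B \<pi>" using band_projection_imp_band_proj[OF \<pi>] ..
    then obtain d where d: "d \<noteq> 0" "d \<in> disj_compl B" and Pd: "P (principal_proj d)"
      using good \<open>\<pi> \<noteq> id\<close> by blast
    have self: "principal_proj d d = d" by (rule principal_proj_self[OF dc])
    have "principal_proj d \<in> G"
      using band_proj.band_projection[OF band_proj_principal_proj[OF dc]] Pd self d(1)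
      by (auto simp: G_def dest: fun_cong[of _ _ d])
    moreover have "principal_proj d \<circ> \<rho> = (\<lambda>_. 0) \<and> \<rho> \<circ> principal_proj d = (\<lambda>_. 0)" if "\<rho> \<in> M" for \<rho>
      using principal_proj_orthogonal[OF dc B _ _ d(2)] MG that dom by (auto simp: G_def)
    ultimately have "insert (principal_proj d) M \<in> \<A>" using MG orth by (auto simp: \<A>_def pairwise_insert)
    hence "principal_proj d \<in> M" using M_max by blast
    hence "principal_proj d (principal_proj d d) = 0"
      using principal_proj_orthogonal[OF dc B _ _ d(2)] MG dom by (auto simp: G_def fun_eq_iff)
    thus False using self d(1) by simp
  qed
  have "band_projection \<rho> \<and> \<rho> \<noteq> (\<lambda>_. 0)" if "\<rho> \<in> M" for \<rho>
    using MG that by (simp add: G_def subset_iff)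
  then obtain \<Delta> \<rho> where "partition_of_unity (\<Delta>::'a set) \<rho>" "\<rho> ` \<Delta> = M"
    using partition_of_unity_of_maximal[OF _ orth max] by blast
  thus ?thesis using MG by (auto simp: G_def)
qed

section \<open>Disjointness forces fragment partitions\<close>

lemma principal_proj_eq_diff_proj:
  assumes dc: "dedekind_complete TYPE('a::vector_lattice)"
    and \<pi>: "band_proj B \<pi>" and d: "d \<in> disj_compl (B::'a set)"
  shows "principal_proj d v = principal_proj d (v - \<pi> v)"
proof -
  interpret D: band_proj "principal_band d" "principal_proj d" by (rule band_proj_principal_proj[OF dc])
  have "principal_proj d (\<pi> v) = 0"
    using principal_proj_band_of_disj_compl[OF dc d] band_proj.proj_in_band[OF \<pi>] by blast
  thus ?thesis by (simp add: D.proj_diff)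
qed

text \<open>With \<open>a\<close>, \<open>b\<close> the components of \<open>T x\<close>, \<open>S x\<close> outside the band of \<open>\<pi>\<close>: if \<open>a = 0\<close> any
  \<open>d\<close> outside works with \<open>y = x\<close>; if \<open>a \<noteq> 0\<close> is disjoint from \<open>b\<close>, then \<open>d = a\<close> works with
  \<open>y = 0\<close>; otherwise apply the previous construction to \<open>\<epsilon> (inf a b)\<close>.\<close>

lemma exists_principal_proj_in_disj_compl:
  fixes S T :: "'e::vector_lattice \<Rightarrow> 'f::vector_lattice"
  assumes dc: "dedekind_complete TYPE('f)" and S: "S \<in> U_pos" and T: "T \<in> U_pos"
    and disjoint: "U_inf_is S T (\<lambda>_. 0)"
    and \<pi>: "band_proj B \<pi>" "\<pi> \<noteq> id" and \<epsilon>: "\<epsilon> > 0"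
  shows "\<exists>d. d \<noteq> 0 \<and> d \<in> disj_compl B \<and>
    (\<exists>y\<in>fragments x. principal_proj d (T y) \<le> \<epsilon> *\<^sub>R T x \<and> principal_proj d (S (x - y)) \<le> \<epsilon> *\<^sub>R S x)"
proof -
  interpret band_proj B \<pi> by (rule \<pi>(1))
  have S0: "0 \<le> S z" and T0: "0 \<le> T z" for z using U_posD(3) S T by blast+
  have bounds0: "0 \<le> \<epsilon> *\<^sub>R T x" "0 \<le> \<epsilon> *\<^sub>R S x"
    using \<epsilon> by (simp_all add: S0 T0 scaleR_nonneg_nonneg)
  have zero: "T 0 = 0" "S 0 = 0" "principal_proj d 0 = 0" for d :: 'f
    using orth_additive_zero U_posD(1) S T principal_proj_disjoint[OF dc disjoint_el_zero(1)]
    by auto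
  let ?a = "T x - \<pi> (T x)" and ?b = "S x - \<pi> (S x)"
  have a: "?a \<in> disj_compl B" "0 \<le> ?a" "?a \<le> T x"
    and b: "?b \<in> disj_compl B" "0 \<le> ?b" "?b \<le> S x"
    using diff_proj_in_disj_compl proj_nonneg T0 S0 by (auto simp: proj_nonneg)
  consider "?a = 0" | "?a \<noteq> 0" "inf ?a ?b = 0" | "inf ?a ?b \<noteq> 0" by blast
  thus ?thesis
  proof cases
    case 1
    obtain z where "\<pi> z \<noteq> z" using \<pi>(2) by (auto simp: fun_eq_iff)
    moreover have "principal_proj (z - \<pi> z) (T x) = 0"
      using principal_proj_eq_diff_proj[OF dc \<pi>(1) diff_proj_in_disj_compl] 1 zero by metis
    ultimately show ?thesis
      using diff_proj_in_disj_compl fragments_self bounds0 zero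
      by (intro exI[of _ "z - \<pi> z"] conjI bexI[of _ x]) auto
  next
    case 2
    have "disjoint_el ?a ?b" using 2 a b by (simp add: disjoint_el_def vabs_of_nonneg)
    hence "principal_proj ?a (S x) = 0"
      using principal_proj_eq_diff_proj[OF dc \<pi>(1) a(1)] principal_proj_disjoint[OF dc] by metis
    thus ?thesis
      using 2 a(1) fragments_zero bounds0 zero by (intro exI[of _ ?a] conjI bexI[of _ 0]) auto
  next
    case 3
    define w where "w = \<epsilon> *\<^sub>R inf ?a ?b"
    have w: "0 \<le> w" "w \<noteq> 0" using 3 a b \<epsilon> by (simp_all add: w_def scaleR_nonneg_nonneg)
    have wa: "w \<le> \<epsilon> *\<^sub>R ?a" and wb: "w \<le> \<epsilon> *\<^sub>R ?b"
      using \<epsilon> by (simp_all add: w_def scaleR_left_mono)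
    have wT: "w \<le> \<epsilon> *\<^sub>R T x" and wS: "w \<le> \<epsilon> *\<^sub>R S x"
      using order_trans[OF wa scaleR_left_mono[OF a(3)]] order_trans[OF wb scaleR_left_mono[OF b(3)]] \<epsilon>
      by simp_all
    obtain d y where "d \<noteq> 0" "vabs d \<le> w" "y \<in> fragments x"
      "principal_proj d (T y) \<le> w" "principal_proj d (S (x - y)) \<le> w"
      using exists_principal_proj_le[OF dc S T disjoint w] by blast
    moreover have "vabs d \<le> vabs (\<epsilon> *\<^sub>R ?a)"
      using order_trans[OF \<open>vabs d \<le> w\<close> wa] \<epsilon> a(2) by (simp add: vabs_scaleR vabs_of_nonneg)
    hence "d \<in> disj_compl B"
      by (rule ideal_solid[OF ideal_disj_compl ideal_scaleR[OF ideal_disj_compl a(1)]])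
    ultimately show ?thesis using wT wS by (blast intro: order_trans)
  qed
qed

lemma fragment_partition_if_U_inf_zero:
  fixes S T :: "'e::vector_lattice \<Rightarrow> 'f::vector_lattice"
  assumes dc: "dedekind_complete TYPE('f)" and S: "S \<in> U_pos" and T: "T \<in> U_pos"
    and disjoint: "U_inf_is S T (\<lambda>_. 0)" and \<epsilon>: "\<epsilon> > 0"
  shows "fragment_partition S T x \<epsilon>"
proof -
  have "\<exists>(\<Delta>::'f set) \<rho>. partition_of_unity \<Delta> \<rho> \<and>
      (\<forall>\<alpha>\<in>\<Delta>. \<exists>y\<in>fragments x. \<rho> \<alpha> (T y) \<le> \<epsilon> *\<^sub>R T x \<and> \<rho> \<alpha> (S (x - y)) \<le> \<epsilon> *\<^sub>R S x)"
    by (rule exhaustion_by_principal_projs[OF dc])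
      (rule exists_principal_proj_in_disj_compl[OF dc S T disjoint _ _ \<epsilon>])
  then obtain \<Delta> :: "'f set" and \<rho> where pu: "partition_of_unity \<Delta> \<rho>"
    and "\<forall>\<alpha>\<in>\<Delta>. \<exists>y\<in>fragments x. \<rho> \<alpha> (T y) \<le> \<epsilon> *\<^sub>R T x \<and> \<rho> \<alpha> (S (x - y)) \<le> \<epsilon> *\<^sub>R S x"
    by blast
  then obtain xs where "\<forall>\<alpha>\<in>\<Delta>. xs \<alpha> \<in> fragments x \<and>
      \<rho> \<alpha> (T (xs \<alpha>)) \<le> \<epsilon> *\<^sub>R T x \<and> \<rho> \<alpha> (S (x - xs \<alpha>)) \<le> \<epsilon> *\<^sub>R S x"
    by metis
  thus ?thesis unfolding fragment_partition_def using pu by blast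
qed

theorem theorem3p3:
  fixes S T :: "'e::vector_lattice \<Rightarrow> 'f::vector_lattice"
  assumes "dedekind_complete TYPE('f)"
    and "S \<in> U_pos" and "T \<in> U_pos"
  shows "U_inf_is S T (\<lambda>_. 0) \<longleftrightarrow>
    (\<forall>x. \<forall>\<epsilon>::real. \<epsilon> > 0 \<longrightarrow>
      (\<exists>(\<Delta>::'f set) (\<rho>::'f \<Rightarrow> 'f \<Rightarrow> 'f) (xs::'f \<Rightarrow> 'e).
         partition_of_unity \<Delta> \<rho> \<and> (\<forall>\<alpha>\<in>\<Delta>. xs \<alpha> \<in> fragments x) \<and>
         (\<forall>\<alpha>\<in>\<Delta>. \<rho> \<alpha> (T (xs \<alpha>)) \<le> \<epsilon> *\<^sub>R T x \<and>
                   \<rho> \<alpha> (S (x - xs \<alpha>)) \<le> \<epsilon> *\<^sub>R S x)))"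
  using fragment_partition_if_U_inf_zero[OF assms] U_inf_zero_if_fragment_partition[OF assms]
  unfolding fragment_partition_def by blast

end
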